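(* Let $0<a<b<1$ with $a+b=1$, let $m\in C^1([0,1])$ be non-constant and $c\in C([0,1])$, and assume (H1), (H2) and $m\in S_{\mathcal{N}}$. Then $\lim_{s\to+\infty}\lambda(s)=\lambda^{\mathcal{N}}$.
   Context: Fix an integer $d\ge1$. $\lambda(s)$ denotes the principal eigenvalue of $-\varphi''-\frac{d-1}{r}\varphi'-2s\,m'(r)\varphi'+c(r)\varphi=\lambda\varphi$ on $(0,1)$, $\varphi'(0)=\varphi'(1)=0$; equivalently $\lambda(s)=\min\{\int_0^1 r^{d-1}e^{2sm}(|\varphi'|^2+c\varphi^2)dr:\ \varphi\in H^1((0,1)),\ \int_0^1 r^{d-1}e^{2sm}\varphi^2dr=1\}$. $\lambda^{\mathcal{D}}$ (resp. $\lambda^{\mathcal{N}}$) is the principal eigenvalue of $-\varphi''-\frac{d-1}{r}\varphi'+c\varphi=\lambda\varphi$ on $(a,b)$ with Dirichlet (resp. Neumann) boundary conditions, i.e. the minimum of $\int_a^b r^{d-1}(|\varphi'|^2+c\varphi^2)dr$ over $\varphi\in H^1_0((a,b))$ (resp. $H^1((a,b))$) with $\int_a^b r^{d-1}\varphi^2dr=1$. (H1): $m(r)=m(1-r)$ on $[0,1]$ and $m\equiv0$ on $[a,b]$, where $a+b=1$. (H2): $c>0$ on $[0,1]$ and $c(r)>\lambda^{\mathcal{D}}$ for $r\in[0,a]\cup[b,1]$. Step function $\bar m$: given $\delta\in(0,a)$, constants $0<h<\alpha<\beta<1<\nu$ and $l\in\mathbb{N}$ with $\sum_{i\ge1}(\alpha^{i+l}+\beta^{i+l})=a-\delta$,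 put $Y_0=\delta$, $Y_n=\delta+\sum_{i=1}^n(\alpha^{i+l}+\beta^{i+l})$ and $X_n=Y_n-\beta^{n+l}$ for $n\ge1$; define $\bar m(r)=h^n$ on $[Y_{n-1},X_n]$ and $\bar m(r)=-\nu h^n$ on $[X_n,Y_n]$ for $n\ge1$ (so on $[\delta,a)$), and $\bar m(r)=\bar m(1-r)$ for $r\in[b,1-\delta]$. $S_{\mathcal{N}}$: the set of $m\in C^1([0,1])$ such that, for some such $\delta,h,\alpha,\beta,\nu,l$, $m'$ changes sign only finitely many times in $[0,\delta)\cup(1-\delta,1]$ and $m(r)\le\bar m(r)$ for all $r\in[\delta,a]\cup[b,1-\delta]$. *)

theory Defs
  imports "HOL-Analysis.Analysis"
begin

text \<open>One-dimensional Sobolev space H^1((x0,x1)): phi is (a representative of) an element of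
  H^1 with weak derivative g iff g is square integrable (hence integrable) on the interval and
  phi(x) = phi(x0) + integral of g over [x0,x]  (absolutely continuous representative).\<close>
definition H1pair :: "real \<Rightarrow> real \<Rightarrow> (real \<Rightarrow> real) \<Rightarrow> (real \<Rightarrow> real) \<Rightarrow> bool" where
  "H1pair x0 x1 phi g \<longleftrightarrow>
     g integrable_on {x0..x1} \<and> (\<lambda>r. (g r)^2) integrable_on {x0..x1} \<and>
     (\<forall>x\<in>{x0..x1}. phi x = phi x0 + integral {x0..x} g)"

definition lambda_s :: "nat \<Rightarrow> (real \<Rightarrow> real) \<Rightarrow> (real \<Rightarrow> real) \<Rightarrow> real \<Rightarrow> real" where
  "lambda_s d m c s = Inf {integral {0..1} (\<lambda>r. r^(d-1) * exp (2 * s * m r) * ((g r)^2 + c r * (phi r)^2))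
      | phi g. H1pair 0 1 phi g \<and>
               integral {0..1} (\<lambda>r. r^(d-1) * exp (2 * s * m r) * (phi r)^2) = 1}"

definition lambdaN :: "nat \<Rightarrow> (real \<Rightarrow> real) \<Rightarrow> real \<Rightarrow> real \<Rightarrow> real" where
  "lambdaN d c a b = Inf {integral {a..b} (\<lambda>r. r^(d-1) * ((g r)^2 + c r * (phi r)^2))
      | phi g. H1pair a b phi g \<and> integral {a..b} (\<lambda>r. r^(d-1) * (phi r)^2) = 1}"

definition lambdaD :: "nat \<Rightarrow> (real \<Rightarrow> real) \<Rightarrow> real \<Rightarrow> real \<Rightarrow> real" where
  "lambdaD d c a b = Inf {integral {a..b} (\<lambda>r. r^(d-1) * ((g r)^2 + c r * (phi r)^2))
      | phi g. H1pair a b phi g \<and> phi a = 0 \<and> phi b = 0 \<and>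
               integral {a..b} (\<lambda>r. r^(d-1) * (phi r)^2) = 1}"

definition finite_sign_changes :: "(real \<Rightarrow> real) \<Rightarrow> real set \<Rightarrow> bool" where
  "finite_sign_changes f A \<longleftrightarrow>
     (\<exists>P. finite P \<and> (\<forall>x y. x \<le> y \<and> {x..y} \<subseteq> A \<and> {x..y} \<inter> P = {} \<longrightarrow> f x * f y \<ge> 0))"

definition Yseq :: "real \<Rightarrow> real \<Rightarrow> real \<Rightarrow> nat \<Rightarrow> nat \<Rightarrow> real" where
  "Yseq \<delta> \<alpha> \<beta> l n = \<delta> + (\<Sum>i=1..n. \<alpha>^(i+l) + \<beta>^(i+l))"

definition Xseq :: "real \<Rightarrow> real \<Rightarrow> real \<Rightarrow> nat \<Rightarrow> nat \<Rightarrow> real" where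
  "Xseq \<delta> \<alpha> \<beta> l n = Yseq \<delta> \<alpha> \<beta> l n - \<beta>^(n+l)"

text \<open>Membership in S_N (m' is the derivative of m).  The condition m \<le> bar m on [delta,a] and on
  [b,1-delta] (where bar m(r) = bar m(1-r)) is written out piecewise.\<close>
definition in_SN :: "(real \<Rightarrow> real) \<Rightarrow> (real \<Rightarrow> real) \<Rightarrow> real \<Rightarrow> bool" where
  "in_SN m m' a \<longleftrightarrow>
    (\<exists>\<delta> h \<alpha> \<beta> \<nu> (l::nat).
       0 < \<delta> \<and> \<delta> < a \<and> 0 < h \<and> h < \<alpha> \<and> \<alpha> < \<beta> \<and> \<beta> < 1 \<and> 1 < \<nu> \<and>
       (\<Sum>i. \<alpha>^(i+1+l) + \<beta>^(i+1+l)) = a - \<delta> \<and>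
       finite_sign_changes m' ({0..<\<delta>} \<union> {1-\<delta><..1}) \<and>
       (\<forall>n\<ge>1. \<forall>r\<in>{Yseq \<delta> \<alpha> \<beta> l (n-1) .. Xseq \<delta> \<alpha> \<beta> l n}.
            m r \<le> h^n \<and> m (1-r) \<le> h^n) \<and>
       (\<forall>n\<ge>1. \<forall>r\<in>{Xseq \<delta> \<alpha> \<beta> l n .. Yseq \<delta> \<alpha> \<beta> l n}.
            m r \<le> - \<nu> * h^n \<and> m (1-r) \<le> - \<nu> * h^n))"

end

theory Submission
  imports Defs
begin

text \<open>
  All three eigenvalues are infima of weighted Rayleigh quotients; \<open>\<lambda>(s)\<close> uses the weight
  \<open>W\<^sub>s r = r^(d-1) e^(2 s m r)\<close>, which coincides with the Neumann weight on \<open>[a,b]\<close>.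

  Lower bound: outside \<open>(a,b)\<close> the potential satisfies \<open>c > \<lambda>\<^sub>D \<ge> \<lambda>\<^sub>N\<close>, so splitting the energy of
  any normalised function into the three pieces and using the Rayleigh inequality on \<open>[a,b]\<close> gives
  \<open>\<lambda>\<^sub>N \<le> \<lambda>(s)\<close> for every \<open>s\<close>.

  Upper bound: extend a nearly optimal Neumann function \<open>\<psi>\<close> from \<open>[a,b]\<close> by the constants
  \<open>\<psi>(a)\<close>, \<open>\<psi>(b)\<close>, switched off linearly on the layer \<open>[X\<^sub>n,Y\<^sub>n]\<close> and its mirror image. There
  \<open>m \<le> -\<nu> h^n\<close>, so the gradient cost \<open>\<beta>^-(n+l)\<close> is damped by \<open>e^(-2 s \<nu> h^n)\<close>; on the plateau
  \<open>[Y\<^sub>n,a]\<close> we have \<open>m \<le> h^(n+1)\<close> on a set of length \<open>O(\<beta>^n)\<close>. Choosing \<open>n\<close> with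
  \<open>s h^(n+1) \<le> \<kappa> n < s h^n + \<kappa>\<close> makes both errors geometrically small in \<open>n\<close>, and
  \<open>n \<rightarrow> \<infinity>\<close> as \<open>s \<rightarrow> \<infinity>\<close>.
\<close>

section \<open>One-dimensional \<open>H\<^sup>1\<close> pairs\<close>

lemma H1pairD:
  assumes "H1pair x0 x1 phi g"
  shows "g integrable_on {x0..x1}" "(\<lambda>r. (g r)^2) integrable_on {x0..x1}"
    and "x \<in> {x0..x1} \<Longrightarrow> phi x = phi x0 + integral {x0..x} g"
  using assms unfolding H1pair_def by blast+

lemma H1pair_continuous_on:
  assumes "H1pair x0 x1 phi g"
  shows "continuous_on {x0..x1} phi"
proof -
  have "continuous_on {x0..x1} (\<lambda>x. phi x0 + integral {x0..x} g)"
    by (rule continuous_on_add[OF continuous_on_const indefinite_integral_continuous_1[OF H1pairD(1)[OF assms]]])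
  then show ?thesis
    by (rule continuous_on_eq) (metis H1pairD(3)[OF assms])
qed

lemma H1pair_integral_eq:
  assumes "H1pair x0 x1 phi g" "x0 \<le> u" "u \<le> v" "v \<le> x1"
  shows "(g has_integral phi v - phi u) {u..v}"
proof -
  have "g integrable_on {x0..v}"
    using H1pairD(1)[OF assms(1)] assms by (rule_tac integrable_subinterval_real) auto
  then have "integral {x0..u} g + integral {u..v} g = integral {x0..v} g"
    using assms by (intro Henstock_Kurzweil_Integration.integral_combine) auto
  then have "integral {u..v} g = phi v - phi u"
    using H1pairD(3)[OF assms(1), of u] H1pairD(3)[OF assms(1), of v] assms by simp
  moreover have "g integrable_on {u..v}"
    using H1pairD(1)[OF assms(1)] assms by (rule_tac integrable_subinterval_real) auto
  ultimately show ?thesis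
    by (metis has_integral_integral)
qed

lemma H1pair_subinterval:
  assumes "H1pair x0 x1 phi g" "x0 \<le> p" "p \<le> q" "q \<le> x1"
  shows "H1pair p q phi g"
  unfolding H1pair_def
proof (intro conjI ballI)
  show "g integrable_on {p..q}" "(\<lambda>r. (g r)^2) integrable_on {p..q}"
    using assms by (auto intro!: integrable_subinterval_real[OF H1pairD(1)[OF assms(1)]]
                                  integrable_subinterval_real[OF H1pairD(2)[OF assms(1)]])
  show "phi x = phi p + integral {p..x} g" if "x \<in> {p..q}" for x
    using H1pair_integral_eq[OF assms(1), of p x] that assms by (simp add: integral_unique)
qed

lemma H1pair_divide:
  assumes "H1pair x0 x1 phi g"
  shows "H1pair x0 x1 (\<lambda>r. phi r / k) (\<lambda>r. g r / k)"
  unfolding H1pair_def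
proof (intro conjI ballI)
  show "(\<lambda>r. g r / k) integrable_on {x0..x1}"
    using H1pairD(1)[OF assms] by (rule integrable_on_divide)
  show "(\<lambda>r. (g r / k)^2) integrable_on {x0..x1}"
    using integrable_on_divide[OF H1pairD(2)[OF assms], of "k^2"] by (simp add: power_divide)
  show "phi x / k = phi x0 / k + integral {x0..x} (\<lambda>r. g r / k)" if "x \<in> {x0..x1}" for x
    using H1pairD(3)[OF assms that] by (simp add: add_divide_distrib)
qed

lemma H1pair_join:
  assumes "H1pair p q phi g" "H1pair q r psi f" "p \<le> q" "q \<le> r" "phi q = psi q"
  shows "H1pair p r (\<lambda>x. if x \<le> q then phi x else psi x) (\<lambda>x. if x \<le> q then g x else f x)"
    (is "H1pair p r ?phi ?g")
proof -
  have left: "(?g has_integral phi x - phi p) {p..x}" if "p \<le> x" "x \<le> q" for x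
    by (rule has_integral_eq[OF _ H1pair_integral_eq[OF assms(1) order.refl that]]) (use that in auto)
  have right: "(?g has_integral psi x - psi q) {q..x}" if "q \<le> x" "x \<le> r" for x
    by (rule has_integral_spike_finite[of "{q}", OF _ _ H1pair_integral_eq[OF assms(2) order.refl that]])
       (use that in auto)
  have prim: "(?g has_integral ?phi x - ?phi p) {p..x}" if "x \<in> {p..r}" for x
  proof (cases "x \<le> q")
    case True
    then show ?thesis using left[of x] that by auto
  next
    case False
    have "(?g has_integral (phi q - phi p) + (psi x - psi q)) {p..x}"
      by (rule has_integral_combine[OF assms(3) _ left[OF assms(3) order.refl] right])
         (use False that in auto)
    then show ?thesis using False assms(3,5) by simp
  qed
  have sq: "(\<lambda>x. (?g x)^2) integrable_on {p..r}"
  proof (rule Henstock_Kurzweil_Integration.integrable_combine[OF assms(3,4)])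
    show "(\<lambda>x. (?g x)^2) integrable_on {p..q}"
      by (rule integrable_eq[OF H1pairD(2)[OF assms(1)]]) auto
    show "(\<lambda>x. (?g x)^2) integrable_on {q..r}"
      by (rule integrable_spike_finite[of "{q}" _ _ "\<lambda>x. (f x)^2", OF _ _ H1pairD(2)[OF assms(2)]]) auto
  qed
  show ?thesis
    unfolding H1pair_def
  proof (intro conjI ballI sq)
    show "?g integrable_on {p..r}"
      using prim[of r] assms(3,4) by (simp add: has_integral_integrable)
    show "?phi x = ?phi p + integral {p..x} ?g" if "x \<in> {p..r}" for x
      using integral_unique[OF prim[OF that]] by linarith
  qed
qed

lemma H1pair_fundamental_theorem:
  assumes "finite S" "continuous_on {p..q} phi"
    and "\<And>x. x \<in> {p<..<q} - S \<Longrightarrow> (phi has_real_derivative g x) (at x)"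
    and "(\<lambda>r. (g r)^2) integrable_on {p..q}" "p \<le> q"
  shows "H1pair p q phi g"
proof -
  have prim: "(g has_integral phi x - phi p) {p..x}" if "x \<in> {p..q}" for x
  proof (rule fundamental_theorem_of_calculus_interior_strong[OF assms(1)])
    show "p \<le> x" using that by simp
    show "continuous_on {p..x} phi" using assms(2) by (rule continuous_on_subset) (use that in auto)
    fix y assume "y \<in> {p<..<x} - S"
    then have "(phi has_real_derivative g y) (at y)" using assms(3) that by auto
    then show "(phi has_vector_derivative g y) (at y)"
      by (simp add: has_real_derivative_iff_has_vector_derivative)
  qed
  show ?thesis
    unfolding H1pair_def
  proof (intro conjI ballI assms(4))
    show "g integrable_on {p..q}"
      using prim[of q] assms(5) by (simp add: has_integral_integrable)
    show "phi x = phi p + integral {p..x} g" if "x \<in> {p..q}" for x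
      using integral_unique[OF prim[OF that]] by linarith
  qed
qed

section \<open>Weighted Rayleigh quotients\<close>

definition energy ::
  "real \<Rightarrow> real \<Rightarrow> (real \<Rightarrow> real) \<Rightarrow> (real \<Rightarrow> real) \<Rightarrow> (real \<Rightarrow> real) \<Rightarrow> (real \<Rightarrow> real) \<Rightarrow> real"
  where "energy x0 x1 W c phi g = integral {x0..x1} (\<lambda>r. W r * ((g r)^2 + c r * (phi r)^2))"

definition mass :: "real \<Rightarrow> real \<Rightarrow> (real \<Rightarrow> real) \<Rightarrow> (real \<Rightarrow> real) \<Rightarrow> real"
  where "mass x0 x1 W phi = integral {x0..x1} (\<lambda>r. W r * (phi r)^2)"

definition normalized_energies :: "real \<Rightarrow> real \<Rightarrow> (real \<Rightarrow> real) \<Rightarrow> (real \<Rightarrow> real) \<Rightarrow> real set"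
  where "normalized_energies x0 x1 W c =
    {energy x0 x1 W c phi g | phi g. H1pair x0 x1 phi g \<and> mass x0 x1 W phi = 1}"

lemma lambda_s_eq_Inf:
  "lambda_s d m c s = Inf (normalized_energies 0 1 (\<lambda>r. r^(d-1) * exp (2 * s * m r)) c)"
  unfolding lambda_s_def normalized_energies_def energy_def mass_def by (rule refl)

lemma lambdaN_eq_Inf: "lambdaN d c a b = Inf (normalized_energies a b (\<lambda>r. r^(d-1)) c)"
  unfolding lambdaN_def normalized_energies_def energy_def mass_def by (rule refl)

lemma lambdaD_eq_Inf:
  "lambdaD d c a b = Inf {energy a b (\<lambda>r. r^(d-1)) c phi g | phi g.
     H1pair a b phi g \<and> phi a = 0 \<and> phi b = 0 \<and> mass a b (\<lambda>r. r^(d-1)) phi = 1}"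
  unfolding lambdaD_def energy_def mass_def by (rule refl)

lemma integral_pos_continuous:
  fixes f :: "real \<Rightarrow> real"
  assumes "continuous_on {p..q} f" "\<And>x. x \<in> {p..q} \<Longrightarrow> 0 \<le> f x"
    and "y \<in> {p..q}" "0 < f y" "p < q"
  shows "0 < integral {p..q} f"
proof -
  have int: "(f has_integral integral {p..q} f) {p..q}"
    using assms(1) integrable_continuous_interval by blast
  have "integral {p..q} f \<noteq> 0"
    using has_integral_0_cbox_imp_0[of p q f y] assms int by auto
  moreover have "0 \<le> integral {p..q} f"
    using int assms(2) by (rule has_integral_nonneg)
  ultimately show ?thesis by simp
qed

lemma integrable_continuous_times_nonneg:
  fixes w f :: "real \<Rightarrow> real"
  assumes "continuous_on {p..q} w" "f integrable_on {p..q}" "\<And>x. x \<in> {p..q} \<Longrightarrow> 0 \<le> f x"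
  shows "(\<lambda>x. w x * f x) integrable_on {p..q}"
proof -
  have "(\<lambda>x. w x * f x) absolutely_integrable_on {p..q}"
  proof (rule absolutely_integrable_bounded_measurable_product_real)
    show "w \<in> borel_measurable (lebesgue_on {p..q})"
      using assms(1) by (intro continuous_imp_measurable_on_sets_lebesgue) auto
    show "bounded (w ` {p..q})"
      using assms(1) by (intro compact_imp_bounded compact_continuous_image) auto
    show "f absolutely_integrable_on {p..q}"
      using assms(2,3) by (intro nonnegative_absolutely_integrable_1) auto
  qed auto
  then show ?thesis by (rule set_lebesgue_integral_eq_integral(1))
qed

lemma integral_nonneg_of_nonneg:
  fixes f :: "real \<Rightarrow> real"
  assumes "\<And>x. x \<in> S \<Longrightarrow> 0 \<le> f x"
  shows "0 \<le> integral S f"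
  using assms integral_nonneg[of f S] not_integrable_integral[of f S] by fastforce

context
  fixes x0 x1 :: real and W c phi g :: "real \<Rightarrow> real"
  assumes H1: "H1pair x0 x1 phi g"
    and W_cont: "continuous_on {x0..x1} W" and c_cont: "continuous_on {x0..x1} c"
begin

lemma integrable_mass_density: "(\<lambda>r. W r * (phi r)^2) integrable_on {x0..x1}"
  using H1pair_continuous_on[OF H1] W_cont
  by (intro integrable_continuous_interval continuous_intros)

lemma integrable_energy_density:
  "(\<lambda>r. W r * ((g r)^2 + c r * (phi r)^2)) integrable_on {x0..x1}"
proof -
  have "(\<lambda>r. W r * (g r)^2) integrable_on {x0..x1}"
    using integrable_continuous_times_nonneg[OF W_cont H1pairD(2)[OF H1]] by simp
  moreover have "(\<lambda>r. W r * c r * (phi r)^2) integrable_on {x0..x1}"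
    using H1pair_continuous_on[OF H1] W_cont c_cont
    by (intro integrable_continuous_interval continuous_intros)
  ultimately show ?thesis
    by (subst distrib_left) (auto simp: mult.assoc dest: integrable_add)
qed

lemma mass_combine:
  assumes "x0 \<le> p" "p \<le> x1"
  shows "mass x0 x1 W phi = mass x0 p W phi + mass p x1 W phi"
  unfolding mass_def
  using Henstock_Kurzweil_Integration.integral_combine[OF assms integrable_mass_density] by simp

lemma energy_combine:
  assumes "x0 \<le> p" "p \<le> x1"
  shows "energy x0 x1 W c phi g = energy x0 p W c phi g + energy p x1 W c phi g"
  unfolding energy_def
  using Henstock_Kurzweil_Integration.integral_combine[OF assms integrable_energy_density] by simp

lemma mult_mass_le_energy_combine:
  assumes "x0 \<le> p" "p \<le> x1"
    and "L * mass x0 p W phi \<le> energy x0 p W c phi g" "L * mass p x1 W phi \<le> energy p x1 W c phi g"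
  shows "L * mass x0 x1 W phi \<le> energy x0 x1 W c phi g"
  using assms mass_combine[OF assms(1,2)] energy_combine[OF assms(1,2)] by (simp add: distrib_left)

end

lemma mass_nonneg:
  assumes "\<And>r. r \<in> {x0..x1} \<Longrightarrow> 0 \<le> W r"
  shows "0 \<le> mass x0 x1 W phi"
  unfolding mass_def using assms by (intro integral_nonneg_of_nonneg) auto

lemma energy_nonneg:
  assumes "\<And>r. r \<in> {x0..x1} \<Longrightarrow> 0 \<le> W r" "\<And>r. r \<in> {x0..x1} \<Longrightarrow> 0 \<le> c r"
  shows "0 \<le> energy x0 x1 W c phi g"
  unfolding energy_def using assms by (intro integral_nonneg_of_nonneg) auto

lemma
  shows mass_divide: "mass x0 x1 W (\<lambda>r. phi r / k) = mass x0 x1 W phi / k^2"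
    and energy_divide: "energy x0 x1 W c (\<lambda>r. phi r / k) (\<lambda>r. g r / k) = energy x0 x1 W c phi g / k^2"
  unfolding mass_def energy_def
  by (simp_all add: power_divide times_divide_eq_right flip: integral_divide add_divide_distrib)

lemma bdd_below_normalized_energies:
  assumes "\<And>r. r \<in> {x0..x1} \<Longrightarrow> 0 \<le> W r" "\<And>r. r \<in> {x0..x1} \<Longrightarrow> 0 \<le> c r"
  shows "bdd_below (normalized_energies x0 x1 W c)"
  unfolding normalized_energies_def using energy_nonneg[OF assms] by (auto intro: bdd_belowI[of _ 0])

lemma energy_div_mass_mem_normalized_energies:
  assumes "H1pair x0 x1 phi g" "0 < mass x0 x1 W phi"
  shows "energy x0 x1 W c phi g / mass x0 x1 W phi \<in> normalized_energies x0 x1 W c"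
proof -
  let ?k = "sqrt (mass x0 x1 W phi)"
  have "H1pair x0 x1 (\<lambda>r. phi r / ?k) (\<lambda>r. g r / ?k)"
    using assms(1) by (rule H1pair_divide)
  moreover have "mass x0 x1 W (\<lambda>r. phi r / ?k) = 1"
    using assms(2) by (simp add: mass_divide)
  ultimately show ?thesis
    unfolding normalized_energies_def using assms(2) by (force simp: energy_divide)
qed

lemma Inf_normalized_energies_mult_mass_le:
  assumes "H1pair x0 x1 phi g"
    and "\<And>r. r \<in> {x0..x1} \<Longrightarrow> 0 \<le> W r" "\<And>r. r \<in> {x0..x1} \<Longrightarrow> 0 \<le> c r"
  shows "Inf (normalized_energies x0 x1 W c) * mass x0 x1 W phi \<le> energy x0 x1 W c phi g"
proof (cases "mass x0 x1 W phi = 0")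
  case True
  have "0 \<le> energy x0 x1 W c phi g" using assms(2,3) by (rule energy_nonneg)
  then show ?thesis using True by simp
next
  case False
  have "0 \<le> mass x0 x1 W phi" using assms(2) by (rule mass_nonneg)
  then have pos: "0 < mass x0 x1 W phi" using False by simp
  have "Inf (normalized_energies x0 x1 W c) \<le> energy x0 x1 W c phi g / mass x0 x1 W phi"
    by (intro cInf_lower energy_div_mass_mem_normalized_energies bdd_below_normalized_energies
        assms pos)
  then show ?thesis using pos by (simp add: pos_le_divide_eq)
qed

lemma Inf_normalized_energies_le_energy:
  assumes "H1pair x0 x1 phi g" "1 \<le> mass x0 x1 W phi"
    and "\<And>r. r \<in> {x0..x1} \<Longrightarrow> 0 \<le> W r" "\<And>r. r \<in> {x0..x1} \<Longrightarrow> 0 \<le> c r"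
  shows "Inf (normalized_energies x0 x1 W c) \<le> energy x0 x1 W c phi g"
proof -
  have "energy x0 x1 W c phi g / mass x0 x1 W phi \<in> normalized_energies x0 x1 W c"
    using assms(1,2) by (intro energy_div_mass_mem_normalized_energies) auto
  then have "Inf (normalized_energies x0 x1 W c) \<le> energy x0 x1 W c phi g / mass x0 x1 W phi"
    using assms(3,4) by (intro cInf_lower bdd_below_normalized_energies) auto
  also have "\<dots> \<le> energy x0 x1 W c phi g"
  proof -
    have "0 \<le> energy x0 x1 W c phi g" using assms(3,4) by (rule energy_nonneg)
    then show ?thesis using assms(2) by (simp add: divide_le_eq mult_le_cancel_left1)
  qed
  finally show ?thesis .
qed

lemma normalized_energies_nonempty:
  assumes "x0 < x1" "continuous_on {x0..x1} W" "\<And>r. r \<in> {x0..x1} \<Longrightarrow> 0 \<le> W r"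
    and "y \<in> {x0..x1}" "0 < W y"
  shows "normalized_energies x0 x1 W c \<noteq> {}"
proof -
  have "H1pair x0 x1 (\<lambda>_. 1) (\<lambda>_. 0)"
    unfolding H1pair_def by (simp add: integrable_0)
  moreover have "0 < mass x0 x1 W (\<lambda>_. 1)"
    unfolding mass_def using assms by (intro integral_pos_continuous) auto
  ultimately show ?thesis
    using energy_div_mass_mem_normalized_energies by blast
qed

lemma lambdaN_le_lambdaD:
  assumes "0 < a" "a < b" "\<And>r. r \<in> {a..b} \<Longrightarrow> 0 \<le> c r"
  shows "lambdaN d c a b \<le> lambdaD d c a b"
proof -
  define w where "w = (\<lambda>r::real. r^(d-1))"
  define bump where "bump = (\<lambda>r::real. (r - a) * (b - r))"
  define M where "M = mass a b w bump"
  have H: "H1pair a b bump (\<lambda>r. a + b - 2 * r)"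
    unfolding bump_def using assms(2)
    by (intro H1pair_fundamental_theorem[where S = "{}"] integrable_continuous_interval)
       (auto intro!: derivative_eq_intros continuous_intros simp: algebra_simps)
  have "0 < M"
    unfolding M_def mass_def w_def bump_def using assms(1,2)
    by (intro integral_pos_continuous[where y = "(a + b) / 2"] continuous_intros) auto
  then have "energy a b w c bump (\<lambda>r. a + b - 2 * r) / M \<in>
      {energy a b w c phi g | phi g. H1pair a b phi g \<and> phi a = 0 \<and> phi b = 0 \<and> mass a b w phi = 1}"
    using H1pair_divide[OF H, of "sqrt M"] by (force simp: M_def mass_divide energy_divide bump_def)
  then show ?thesis
    unfolding lambdaN_eq_Inf lambdaD_eq_Inf w_def[symmetric] normalized_energies_def
    using bdd_below_normalized_energies[of a b w c] assms(1,3)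
    by (intro cInf_superset_mono) (auto simp: w_def normalized_energies_def)
qed

lemma mult_mass_le_energy:
  assumes "H1pair p q phi g" "continuous_on {p..q} W" "continuous_on {p..q} c"
    and "\<And>r. r \<in> {p..q} \<Longrightarrow> 0 \<le> W r" "\<And>r. r \<in> {p..q} \<Longrightarrow> L \<le> c r"
  shows "L * mass p q W phi \<le> energy p q W c phi g"
  unfolding mass_def energy_def
proof (subst integral_mult_right[symmetric], rule integral_le)
  show "(\<lambda>r. L * (W r * (phi r)^2)) integrable_on {p..q}"
    using integrable_on_cmult_left[OF integrable_mass_density[OF assms(1-3)], of L] by simp
  show "(\<lambda>r. W r * ((g r)^2 + c r * (phi r)^2)) integrable_on {p..q}"
    by (rule integrable_energy_density[OF assms(1-3)])
  fix r assume r: "r \<in> {p..q}"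
  have "L * (phi r)^2 \<le> (g r)^2 + c r * (phi r)^2"
    using assms(5)[OF r] by (metis add_increasing mult_right_mono zero_le_power2)
  from mult_left_mono[OF this assms(4)[OF r]]
  show "L * (W r * (phi r)^2) \<le> W r * ((g r)^2 + c r * (phi r)^2)"
    by (simp add: ac_simps)
qed

lemma
  assumes "\<And>r. r \<in> {x0..x1} \<Longrightarrow> W r = w r"
  shows mass_cong: "mass x0 x1 W = mass x0 x1 w"
    and energy_cong: "energy x0 x1 W c = energy x0 x1 w c"
    and normalized_energies_cong: "normalized_energies x0 x1 W c = normalized_energies x0 x1 w c"
proof -
  show "mass x0 x1 W = mass x0 x1 w" "energy x0 x1 W c = energy x0 x1 w c"
    unfolding mass_def energy_def using assms by (auto intro!: integral_cong ext)
  then show "normalized_energies x0 x1 W c = normalized_energies x0 x1 w c"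
    unfolding normalized_energies_def by simp
qed

lemma Inf_normalized_energies_subinterval_le:
  assumes "x0 \<le> p" "p \<le> q" "q \<le> x1"
    and W: "continuous_on {x0..x1} W" "\<And>r. r \<in> {x0..x1} \<Longrightarrow> 0 \<le> W r"
    and c: "continuous_on {x0..x1} c" "\<And>r. r \<in> {x0..x1} \<Longrightarrow> 0 \<le> c r"
    and outside: "\<And>r. r \<in> {x0..p} \<union> {q..x1} \<Longrightarrow> Inf (normalized_energies p q W c) \<le> c r"
    and nonempty: "normalized_energies x0 x1 W c \<noteq> {}"
  shows "Inf (normalized_energies p q W c) \<le> Inf (normalized_energies x0 x1 W c)"
proof (rule cInf_greatest[OF nonempty])
  let ?L = "Inf (normalized_energies p q W c)"
  fix v assume "v \<in> normalized_energies x0 x1 W c"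
  then obtain phi g where H: "H1pair x0 x1 phi g" and "mass x0 x1 W phi = 1"
    and v: "v = energy x0 x1 W c phi g"
    unfolding normalized_energies_def by blast
  have sub: "H1pair s t phi g" "continuous_on {s..t} W" "continuous_on {s..t} c"
    if "x0 \<le> s" "s \<le> t" "t \<le> x1" for s t
    using H1pair_subinterval[OF H that] continuous_on_subset[OF W(1)] continuous_on_subset[OF c(1)] that
    by auto
  have px1: "p \<le> x1" and x0q: "x0 \<le> q" using assms(1-3) by linarith+
  have left: "?L * mass x0 p W phi \<le> energy x0 p W c phi g"
    by (rule mult_mass_le_energy[OF sub[OF order.refl assms(1) px1]]) (use W(2) outside px1 in auto)
  have middle: "?L * mass p q W phi \<le> energy p q W c phi g"
    by (rule Inf_normalized_energies_mult_mass_le[OF sub(1)[OF assms(1-3)]])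
       (use W(2) c(2) assms(1,3) in auto)
  have right: "?L * mass q x1 W phi \<le> energy q x1 W c phi g"
    by (rule mult_mass_le_energy[OF sub[OF x0q assms(3) order.refl]]) (use W(2) outside x0q in auto)
  have "?L * mass p x1 W phi \<le> energy p x1 W c phi g"
    by (rule mult_mass_le_energy_combine[OF sub[OF assms(1) px1 order.refl] assms(2,3) middle right])
  then have "?L * mass x0 x1 W phi \<le> energy x0 x1 W c phi g"
    by (rule mult_mass_le_energy_combine[OF H W(1) c(1) assms(1) px1 left])
  then show "?L \<le> v"
    using \<open>mass x0 x1 W phi = 1\<close> unfolding v by simp
qed

section \<open>The geometric partition of \<open>[\<delta>,a)\<close>\<close>

lemma power_shift_sums:
  fixes x :: real
  assumes "\<bar>x\<bar> < 1"
  shows "(\<lambda>i. x^(i+k)) sums (x^k / (1 - x))"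
  using sums_mult[OF geometric_sums[OF assms[folded real_norm_def]], of "x^k"]
  by (simp add: power_add mult.commute)

locale geometric_partition =
  fixes \<delta> \<alpha> \<beta> a :: real and l :: nat
  assumes pos: "0 < \<delta>" "0 < \<alpha>" "\<alpha> < \<beta>" "\<beta> < 1"
    and sums_increments: "(\<Sum>i. \<alpha>^(i+1+l) + \<beta>^(i+1+l)) = a - \<delta>"
begin

abbreviation "Y \<equiv> Yseq \<delta> \<alpha> \<beta> l"
abbreviation "X \<equiv> Xseq \<delta> \<alpha> \<beta> l"

definition increment :: "nat \<Rightarrow> real" where
  "increment i = \<alpha>^(i+1+l) + \<beta>^(i+1+l)"

lemma increment_pos: "0 < increment i"
  unfolding increment_def using pos by (simp add: add_pos_pos)

lemma increment_sums: "increment sums (a - \<delta>)"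
proof -
  have "(\<lambda>i. \<alpha>^(i+1+l)) sums (\<alpha>^(1+l) / (1 - \<alpha>))" "(\<lambda>i. \<beta>^(i+1+l)) sums (\<beta>^(1+l) / (1 - \<beta>))"
    unfolding add.assoc using pos by (intro power_shift_sums; simp)+
  then have "summable increment"
    unfolding increment_def by (intro sums_summable[OF sums_add])
  moreover have "suminf increment = a - \<delta>"
    using sums_increments by (simp add: increment_def[abs_def])
  ultimately show ?thesis using summable_sums by force
qed

lemma Yseq_eq_sum: "Y n = \<delta> + (\<Sum>i<n. increment i)"
  by (induction n) (simp_all add: Yseq_def increment_def sum.cl_ivl_Suc)

lemma Yseq_Suc: "Y (Suc n) = Y n + \<alpha>^(Suc n+l) + \<beta>^(Suc n+l)"
  by (simp add: Yseq_eq_sum increment_def)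

lemma a_minus_Yseq: "(\<lambda>i. increment (i + n)) sums (a - Y n)"
  using sums_split_initial_segment[OF increment_sums, of n]
  by (simp add: Yseq_eq_sum algebra_simps)

lemma Yseq_less: "Y n < a"
  using suminf_pos[OF sums_summable[OF a_minus_Yseq[of n]] increment_pos]
    sums_unique[OF a_minus_Yseq[of n]]
  by simp

lemma Yseq_ge: "\<delta> \<le> Y n"
  unfolding Yseq_eq_sum using increment_pos by (simp add: sum_nonneg less_imp_le)

lemma Yseq_mono: "j \<le> k \<Longrightarrow> Y j \<le> Y k"
  unfolding Yseq_eq_sum using increment_pos by (simp add: less_imp_le sum_mono2)

lemma Yseq_tendsto: "Y \<longlonglongrightarrow> a"
proof -
  have "(\<lambda>n. \<delta> + (\<Sum>i<n. increment i)) \<longlonglongrightarrow> \<delta> + (a - \<delta>)"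
    using increment_sums unfolding sums_def by (intro tendsto_add tendsto_const)
  moreover have "Y = (\<lambda>n. \<delta> + (\<Sum>i<n. increment i))"
    using Yseq_eq_sum by blast
  ultimately show ?thesis by simp
qed

lemma a_minus_Yseq_le: "a - Y n \<le> 2 * \<beta>^n / (1 - \<beta>)"
proof -
  have le: "increment (i + n) \<le> 2 * \<beta>^(i+n)" for i
  proof -
    have "\<alpha>^(i+n+1+l) \<le> \<beta>^(i+n+1+l)" using pos by (intro power_mono) auto
    moreover have "\<beta>^(i+n+1+l) \<le> \<beta>^(i+n)" using pos by (intro power_decreasing) auto
    ultimately show ?thesis unfolding increment_def by (simp add: add.assoc)
  qed
  have "(\<lambda>i. 2 * \<beta>^(i+n)) sums (2 * (\<beta>^n / (1 - \<beta>)))"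
    using pos by (intro sums_mult power_shift_sums) auto
  from sums_le[OF le a_minus_Yseq this] show ?thesis by simp
qed

lemma Yseq_minus_Xseq: "Y n - X n = \<beta>^(n+l)"
  unfolding Xseq_def by simp

lemma Xseq_pos: "1 \<le> n \<Longrightarrow> 0 < X n"
  using Yseq_Suc[of "n - 1"] Yseq_ge[of "n - 1"] pos unfolding Xseq_def
  by (simp add: add_pos_nonneg)

lemma Xseq_less_Yseq: "X n < Y n"
  using Yseq_minus_Xseq[of n] zero_less_power[of \<beta> "n+l"] pos by linarith

lemma Yseq_bracket:
  assumes "Y n \<le> r" "r < a"
  obtains k where "n \<le> k" "Y k \<le> r" "r < Y (Suc k)"
proof -
  have "eventually (\<lambda>j. r < Y j) sequentially"
    using Yseq_tendsto assms(2) by (rule order_tendstoD(1))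
  then obtain J where J: "r < Y J" by (auto simp: eventually_sequentially)
  define j where "j = (LEAST j. r < Y j)"
  have j: "r < Y j" unfolding j_def by (rule LeastI[of _ J]) (rule J)
  have "n < j"
  proof (rule ccontr)
    assume "\<not> n < j"
    then have "Y j \<le> Y n" by (intro Yseq_mono) linarith
    then show False using j assms(1) by linarith
  qed
  then have "j - 1 < j" by linarith
  from not_less_Least[OF this[unfolded j_def], folded j_def]
  have "Y (j - 1) \<le> r" by linarith
  moreover have "r < Y (Suc (j - 1))" using j \<open>n < j\<close> by (simp add: Suc_diff_1)
  moreover have "n \<le> j - 1" using \<open>n < j\<close> by linarith
  ultimately show thesis by (rule that[rotated])
qed

lemma le_power_on_Yseq_tail:
  fixes m :: "real \<Rightarrow> real" and h :: real
  assumes h: "0 < h" "h < 1" and "m a \<le> 0"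
    and up: "\<And>k r. 1 \<le> k \<Longrightarrow> r \<in> {Y (k - 1)..X k} \<Longrightarrow> m r \<le> h^k"
    and down: "\<And>k r. 1 \<le> k \<Longrightarrow> r \<in> {X k..Y k} \<Longrightarrow> m r \<le> 0"
    and r: "r \<in> {Y n..a}"
  shows "m r \<le> h^(n+1)"
proof -
  have nonneg: "0 \<le> h^(n+1)" using h by simp
  show ?thesis
  proof (cases "r = a")
    case True
    then show ?thesis using \<open>m a \<le> 0\<close> nonneg by simp
  next
    case False
    obtain k where k: "n \<le> k" "Y k \<le> r" "r < Y (Suc k)"
      by (rule Yseq_bracket[of n r]) (use r False in auto)
    show ?thesis
    proof (cases "r \<le> X (Suc k)")
      case True
      then have "m r \<le> h^(Suc k)" using up[of "Suc k" r] k by simp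
      also have "\<dots> \<le> h^(n+1)" using h k(1) by (intro power_decreasing) auto
      finally show ?thesis .
    next
      case False
      then have "m r \<le> 0" using down[of "Suc k" r] k by simp
      then show ?thesis using nonneg by linarith
    qed
  qed
qed

end

section \<open>Ramp test functions\<close>

definition ramp :: "real \<Rightarrow> real \<Rightarrow> real \<Rightarrow> real" where
  "ramp X Y r = max 0 (min 1 ((r - X) / (Y - X)))"

definition ramp_slope :: "real \<Rightarrow> real \<Rightarrow> real \<Rightarrow> real" where
  "ramp_slope X Y r = (if X < r \<and> r < Y then 1 / (Y - X) else 0)"

lemma continuous_on_ramp: "continuous_on S (ramp X Y)"
  unfolding ramp_def divide_inverse by (intro continuous_intros)

lemma ramp_eq_0: "X < Y \<Longrightarrow> r \<le> X \<Longrightarrow> ramp X Y r = 0"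
  unfolding ramp_def by (auto simp: divide_nonpos_pos)

lemma ramp_eq_1: "X < Y \<Longrightarrow> Y \<le> r \<Longrightarrow> ramp X Y r = 1"
  unfolding ramp_def by (auto simp: le_divide_eq)

lemma ramp_bounds: "0 \<le> ramp X Y r" "ramp X Y r \<le> 1"
  unfolding ramp_def by auto

lemma ramp_slope_eq_0: "r \<le> X \<or> Y \<le> r \<Longrightarrow> ramp_slope X Y r = 0"
  unfolding ramp_slope_def by auto

lemma has_real_derivative_ramp:
  assumes "X < Y" "r \<noteq> X" "r \<noteq> Y"
  shows "(ramp X Y has_real_derivative ramp_slope X Y r) (at r)"
proof -
  consider "r < X" | "X < r" "r < Y" | "Y < r" using assms by linarith
  then show ?thesis
  proof cases
    case 1
    have "(ramp X Y has_real_derivative 0) (at r)"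
      by (rule has_field_derivative_transform_within_open[OF DERIV_const, where S = "{..<X}"])
         (use 1 assms in \<open>auto simp: ramp_eq_0\<close>)
    then show ?thesis using 1 by (simp add: ramp_slope_def)
  next
    case 2
    have "((\<lambda>x. (x - X) / (Y - X)) has_real_derivative 1 / (Y - X)) (at r)"
      using assms by (auto intro!: derivative_eq_intros)
    then have "(ramp X Y has_real_derivative 1 / (Y - X)) (at r)"
      by (rule has_field_derivative_transform_within_open[where S = "{X<..<Y}"])
         (use 2 in \<open>auto simp: ramp_def divide_le_eq_1 le_divide_eq\<close>)
    then show ?thesis using 2 by (simp add: ramp_slope_def)
  next
    case 3
    have "(ramp X Y has_real_derivative 0) (at r)"
      by (rule has_field_derivative_transform_within_open[OF DERIV_const, where S = "{Y<..}"])
         (use 3 assms in \<open>auto simp: ramp_eq_1\<close>)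
    then show ?thesis using 3 by (simp add: ramp_slope_def)
  qed
qed

lemma has_integral_ramp_slope:
  assumes "X < Y" "p \<le> q"
  shows "(ramp_slope X Y has_integral ramp X Y q - ramp X Y p) {p..q}"
proof (rule fundamental_theorem_of_calculus_interior_strong[of "{X, Y}"])
  fix x assume "x \<in> {p<..<q} - {X, Y}"
  then show "(ramp X Y has_vector_derivative ramp_slope X Y x) (at x)"
    using has_real_derivative_ramp[OF assms(1)]
    by (simp add: has_real_derivative_iff_has_vector_derivative)
qed (use assms continuous_on_ramp in auto)

lemma H1pair_ramp:
  assumes "X < Y" "p \<le> q"
  shows "H1pair p q (\<lambda>r. K * ramp X Y r) (\<lambda>r. K * ramp_slope X Y r)"
  unfolding H1pair_def
proof (intro conjI ballI)
  have slope_int: "ramp_slope X Y integrable_on {p..q}"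
    using has_integral_ramp_slope[OF assms] by blast
  then show "(\<lambda>r. K * ramp_slope X Y r) integrable_on {p..q}"
    using integrable_on_cmult_left[OF slope_int, of K] by simp
  have "(\<lambda>r. K^2 / (Y - X) * ramp_slope X Y r) integrable_on {p..q}"
    using integrable_on_cmult_left[OF slope_int, of "K^2 / (Y - X)"] by simp
  then show "(\<lambda>r. (K * ramp_slope X Y r)^2) integrable_on {p..q}"
    by (rule integrable_eq) (simp add: ramp_slope_def power2_eq_square)
  fix x assume "x \<in> {p..q}"
  then have "integral {p..x} (ramp_slope X Y) = ramp X Y x - ramp X Y p"
    using has_integral_ramp_slope[OF assms(1)] by (simp add: integral_unique)
  then show "K * ramp X Y x = K * ramp X Y p + integral {p..x} (\<lambda>r. K * ramp_slope X Y r)"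
    by (simp flip: distrib_left)
qed

lemma ramp_reflect: "X < Y \<Longrightarrow> ramp X Y (1 - r) = 1 - ramp (1 - Y) (1 - X) r"
  unfolding ramp_def by (auto simp: field_simps max_def min_def)

lemma ramp_slope_reflect: "ramp_slope X Y (1 - r) = ramp_slope (1 - Y) (1 - X) r"
  unfolding ramp_slope_def by auto

lemma H1pair_reflected_ramp:
  assumes "X < Y" "p \<le> q"
  shows "H1pair p q (\<lambda>r. K * ramp X Y (1 - r)) (\<lambda>r. - (K * ramp_slope X Y (1 - r)))"
proof -
  have "H1pair p q (\<lambda>r. - K * ramp (1 - Y) (1 - X) r) (\<lambda>r. - K * ramp_slope (1 - Y) (1 - X) r)"
    using assms by (intro H1pair_ramp) auto
  then show ?thesis
    unfolding H1pair_def ramp_reflect[OF assms(1)] ramp_slope_reflect by (simp add: algebra_simps)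
qed

definition ramp_extension :: "real \<Rightarrow> real \<Rightarrow> real \<Rightarrow> real \<Rightarrow> (real \<Rightarrow> real) \<Rightarrow> real \<Rightarrow> real" where
  "ramp_extension X Y a b psi r =
     (if r \<le> a then psi a * ramp X Y r else if r \<le> b then psi r else psi b * ramp X Y (1 - r))"

definition ramp_extension_deriv ::
  "real \<Rightarrow> real \<Rightarrow> real \<Rightarrow> real \<Rightarrow> (real \<Rightarrow> real) \<Rightarrow> (real \<Rightarrow> real) \<Rightarrow> real \<Rightarrow> real" where
  "ramp_extension_deriv X Y a b psi g r =
     (if r \<le> a then psi a * ramp_slope X Y r else if r \<le> b then g r
      else - (psi b * ramp_slope X Y (1 - r)))"

lemma H1pair_ramp_extension:
  assumes "0 \<le> X" "X < Y" "Y \<le> a" "a \<le> b" "a + b = 1" "H1pair a b psi g"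
  shows "H1pair 0 1 (ramp_extension X Y a b psi) (ramp_extension_deriv X Y a b psi g)"
proof -
  have "H1pair b 1 (\<lambda>r. psi b * ramp X Y (1 - r)) (\<lambda>r. - (psi b * ramp_slope X Y (1 - r)))"
    using assms by (intro H1pair_reflected_ramp) auto
  then have "H1pair a 1 (\<lambda>r. if r \<le> b then psi r else psi b * ramp X Y (1 - r))
      (\<lambda>r. if r \<le> b then g r else - (psi b * ramp_slope X Y (1 - r)))"
    using assms by (rule_tac H1pair_join) (auto simp: ramp_eq_1)
  moreover have "H1pair 0 a (\<lambda>r. psi a * ramp X Y r) (\<lambda>r. psi a * ramp_slope X Y r)"
    using assms by (intro H1pair_ramp) auto
  ultimately show ?thesis
    unfolding ramp_extension_def[abs_def] ramp_extension_deriv_def[abs_def]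
    using assms by (rule_tac H1pair_join) (auto simp: ramp_eq_1)
qed

lemma ramp_density_le:
  assumes "X < Y" "0 \<le> w" "0 \<le> cv" "cv \<le> C"
  shows "t \<le> X \<Longrightarrow> w * ((K * ramp_slope X Y t)^2 + cv * (K * ramp X Y t)^2) \<le> 0"
    and "w \<le> e \<Longrightarrow> w * ((K * ramp_slope X Y t)^2 + cv * (K * ramp X Y t)^2)
           \<le> e * K^2 * (1 / (Y - X)^2 + C)"
    and "Y \<le> t \<Longrightarrow> w \<le> e \<Longrightarrow> w * ((K * ramp_slope X Y t)^2 + cv * (K * ramp X Y t)^2)
           \<le> e * K^2 * C"
proof -
  show "t \<le> X \<Longrightarrow> w * ((K * ramp_slope X Y t)^2 + cv * (K * ramp X Y t)^2) \<le> 0"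
    using assms(1) by (simp add: ramp_slope_eq_0 ramp_eq_0)
next
  assume "w \<le> e"
  have "(ramp_slope X Y t)^2 \<le> 1 / (Y - X)^2"
    unfolding ramp_slope_def by (simp add: power_divide)
  moreover have "cv * (ramp X Y t)^2 \<le> C"
  proof -
    have "(ramp X Y t)^2 \<le> 1" using ramp_bounds[of X Y t] by (simp add: power_le_one)
    from mult_left_mono[OF this assms(3)] show ?thesis using assms(4) by simp
  qed
  ultimately have "(ramp_slope X Y t)^2 + cv * (ramp X Y t)^2 \<le> 1 / (Y - X)^2 + C"
    by linarith
  moreover have "0 \<le> e" using assms(2) \<open>w \<le> e\<close> by linarith
  ultimately have "w * (K^2 * ((ramp_slope X Y t)^2 + cv * (ramp X Y t)^2))
      \<le> e * (K^2 * (1 / (Y - X)^2 + C))"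
    using \<open>w \<le> e\<close> assms(3) by (intro mult_mono mult_left_mono) auto
  then show "w * ((K * ramp_slope X Y t)^2 + cv * (K * ramp X Y t)^2) \<le> e * K^2 * (1 / (Y - X)^2 + C)"
    by (simp add: power_mult_distrib algebra_simps)
next
  assume "Y \<le> t" "w \<le> e"
  then have "w * (cv * K^2) \<le> e * (C * K^2)"
    using assms by (intro mult_mono) auto
  then show "w * ((K * ramp_slope X Y t)^2 + cv * (K * ramp X Y t)^2) \<le> e * K^2 * C"
    using \<open>Y \<le> t\<close> assms(1) by (simp add: ramp_slope_eq_0 ramp_eq_1 algebra_simps)
qed

lemma integral_le_const_interior:
  fixes F :: "real \<Rightarrow> real"
  assumes "F integrable_on {s..t}" "s \<le> t" "\<And>r. r \<in> {s<..<t} \<Longrightarrow> F r \<le> K"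
  shows "integral {s..t} F \<le> K * (t - s)"
proof -
  define G where "G r = (if r \<in> {s<..<t} then F r else K)" for r
  have spike: "G r = F r" if "r \<in> {s..t} - {s, t}" for r
    using that by (auto simp: G_def)
  have "integral {s..t} F = integral {s..t} G"
    using spike by (intro integral_spike[of "{s, t}"]) auto
  also have "\<dots> \<le> integral {s..t} (\<lambda>_. K)"
  proof (rule integral_le)
    show "G integrable_on {s..t}"
      by (rule integrable_spike_finite[of "{s, t}", OF _ spike assms(1)]) simp
  qed (use assms(3) in \<open>auto simp: G_def\<close>)
  finally show ?thesis using assms(2) by (simp add: mult.commute)
qed

text \<open>Bounds are only required on open subintervals: at the junctions the derivative of a glued
  test function is not determined by its pieces.\<close>

lemma integral_le_three_pieces:
  fixes F :: "real \<Rightarrow> real"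
  assumes "F integrable_on {p..q}" "p \<le> u" "u \<le> v" "v \<le> q"
    and "\<And>r. r \<in> {p<..<u} \<Longrightarrow> F r \<le> K1" "\<And>r. r \<in> {u<..<v} \<Longrightarrow> F r \<le> K2"
    and "\<And>r. r \<in> {v<..<q} \<Longrightarrow> F r \<le> K3"
  shows "integral {p..q} F \<le> K1 * (u - p) + K2 * (v - u) + K3 * (q - v)"
proof -
  have int: "F integrable_on {s..t}" if "p \<le> s" "t \<le> q" for s t
    using assms(1) by (rule integrable_subinterval_real) (use that in auto)
  have "integral {p..q} F = integral {p..u} F + integral {u..q} F"
    using Henstock_Kurzweil_Integration.integral_combine[OF assms(2) _ assms(1)] assms(3,4) by simp
  also have "integral {u..q} F = integral {u..v} F + integral {v..q} F"
    using Henstock_Kurzweil_Integration.integral_combine[OF assms(3,4) int] assms(2) by simp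
  finally show ?thesis
    using integral_le_const_interior[OF int assms(2) assms(5)]
      integral_le_const_interior[OF int assms(3) assms(6)]
      integral_le_const_interior[OF int assms(4) assms(7)] assms(2-4)
    by simp
qed

context
  fixes X Y a b C e1 e2 :: real and psi g W c :: "real \<Rightarrow> real"
  assumes XY: "0 \<le> X" "X < Y" "Y \<le> a" and ab: "a < b" "a + b = 1" and H: "H1pair a b psi g"
    and W: "continuous_on {0..1} W" "\<And>r. r \<in> {0..1} \<Longrightarrow> 0 \<le> W r"
    and c: "continuous_on {0..1} c" "\<And>r. r \<in> {0..1} \<Longrightarrow> 0 \<le> c r"
begin

abbreviation "Phi \<equiv> ramp_extension X Y a b psi"
abbreviation "G \<equiv> ramp_extension_deriv X Y a b psi g"

lemma H1pair_ramp_extension_sub: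
  assumes "0 \<le> s" "s \<le> t" "t \<le> 1"
  shows "H1pair s t Phi G" "continuous_on {s..t} W" "continuous_on {s..t} c"
  using H1pair_subinterval[OF H1pair_ramp_extension[OF XY ab(1)[THEN less_imp_le] ab(2) H] assms]
    continuous_on_subset[OF W(1)] continuous_on_subset[OF c(1)] assms
  by auto

lemma ramp_extension_eq_on_middle:
  "r \<in> {a..b} - {a} \<Longrightarrow> Phi r = psi r \<and> G r = g r"
  unfolding ramp_extension_def ramp_extension_deriv_def by auto

lemma mass_ramp_extension_ge: "mass a b W psi \<le> mass 0 1 W Phi"
proof -
  have "0 \<le> a" "b \<le> 1" using XY ab by linarith+
  then have "mass 0 1 W Phi = mass 0 a W Phi + (mass a b W Phi + mass b 1 W Phi)"
    using mass_combine[OF H1pair_ramp_extension_sub[of 0 1], of a]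
      mass_combine[OF H1pair_ramp_extension_sub[of a 1], of b] ab
    by simp
  moreover have "mass a b W Phi = mass a b W psi"
    unfolding mass_def using ramp_extension_eq_on_middle
    by (intro integral_spike[of "{a}"]) auto
  moreover have "0 \<le> mass 0 a W Phi" "0 \<le> mass b 1 W Phi"
    using W(2) \<open>0 \<le> a\<close> \<open>b \<le> 1\<close> ab by (intro mass_nonneg; simp)+
  ultimately show ?thesis by linarith
qed

lemma energy_ramp_extension_le:
  assumes C: "\<And>r. r \<in> {0..1} \<Longrightarrow> c r \<le> C"
    and e1: "\<And>r. r \<in> {X..Y} \<union> {1-Y..1-X} \<Longrightarrow> W r \<le> e1"
    and e2: "\<And>r. r \<in> {Y..a} \<union> {b..1-Y} \<Longrightarrow> W r \<le> e2"
  shows "energy 0 1 W c Phi G \<le> energy a b W c psi g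
    + ((psi a)^2 + (psi b)^2) * (e1 * (1 / (Y - X)^2 + C) * (Y - X) + e2 * C * (a - Y))"
proof -
  have "0 \<le> a" "b \<le> 1" "b \<le> 1 - Y" using XY ab by linarith+
  have density: "W r * ((G r)^2 + c r * (Phi r)^2)
      = W r * ((K * ramp_slope X Y t)^2 + c r * (K * ramp X Y t)^2)"
    if "r \<le> a \<and> K = psi a \<and> t = r \<or> b < r \<and> K = psi b \<and> t = 1 - r" for r K t
    using that ab unfolding ramp_extension_def ramp_extension_deriv_def by auto
  let ?Q = "e1 * (1 / (Y - X)^2 + C) * (Y - X) + e2 * C * (a - Y)"
  have "energy 0 a W c Phi G \<le>
      0 * (X - 0) + e1 * (psi a)^2 * (1 / (Y - X)^2 + C) * (Y - X) + e2 * (psi a)^2 * C * (a - Y)"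
    unfolding energy_def
    using XY \<open>0 \<le> a\<close> ab W(2) c(2) C e1 e2
    by (intro integral_le_three_pieces integrable_energy_density H1pair_ramp_extension_sub)
       (auto simp: density[where K = "psi a"] intro!: ramp_density_le)
  also have "\<dots> = (psi a)^2 * ?Q" by (simp add: algebra_simps)
  finally have left: "energy 0 a W c Phi G \<le> (psi a)^2 * ?Q" .
  have "energy b 1 W c Phi G \<le>
      e2 * (psi b)^2 * C * ((1 - Y) - b) + e1 * (psi b)^2 * (1 / (Y - X)^2 + C) * ((1 - X) - (1 - Y))
      + 0 * (1 - (1 - X))"
    unfolding energy_def
    using XY \<open>b \<le> 1 - Y\<close> ab W(2) c(2) C e1 e2
    by (intro integral_le_three_pieces integrable_energy_density H1pair_ramp_extension_sub)
       (auto simp: density[where K = "psi b"] intro!: ramp_density_le)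
  also have "\<dots> = (psi b)^2 * ?Q"
  proof -
    have "1 - Y - b = a - Y" using ab(2) by simp
    then show ?thesis by (simp only:) (simp add: algebra_simps)
  qed
  finally have right: "energy b 1 W c Phi G \<le> (psi b)^2 * ?Q" .
  have middle: "energy a b W c Phi G = energy a b W c psi g"
    unfolding energy_def using ramp_extension_eq_on_middle
    by (intro integral_spike[of "{a}"]) auto
  have "energy 0 1 W c Phi G = energy 0 a W c Phi G + (energy a b W c Phi G + energy b 1 W c Phi G)"
    using energy_combine[OF H1pair_ramp_extension_sub[of 0 1], of a]
      energy_combine[OF H1pair_ramp_extension_sub[of a 1], of b] \<open>0 \<le> a\<close> \<open>b \<le> 1\<close> ab
    by simp
  with left middle right show ?thesis
    by (simp add: distrib_right)
qed

lemma Inf_normalized_energies_le_ramp_extension: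
  assumes "mass a b W psi = 1" and C: "\<And>r. r \<in> {0..1} \<Longrightarrow> c r \<le> C"
    and e1: "\<And>r. r \<in> {X..Y} \<union> {1-Y..1-X} \<Longrightarrow> W r \<le> e1"
    and e2: "\<And>r. r \<in> {Y..a} \<union> {b..1-Y} \<Longrightarrow> W r \<le> e2"
  shows "Inf (normalized_energies 0 1 W c) \<le> energy a b W c psi g
    + ((psi a)^2 + (psi b)^2) * (e1 * (1 / (Y - X)^2 + C) * (Y - X) + e2 * C * (a - Y))"
proof -
  have "Inf (normalized_energies 0 1 W c) \<le> energy 0 1 W c Phi G"
    using mass_ramp_extension_ge assms(1) W(2) c(2)
    by (intro Inf_normalized_energies_le_energy H1pair_ramp_extension_sub) auto
  also have "\<dots> \<le> energy a b W c psi g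
    + ((psi a)^2 + (psi b)^2) * (e1 * (1 / (Y - X)^2 + C) * (Y - X) + e2 * C * (a - Y))"
    using C e1 e2 by (rule energy_ramp_extension_le)
  finally show ?thesis .
qed

end

section \<open>Balancing the two error terms\<close>

lemma exists_balanced_level:
  fixes h \<kappa> s :: real and N :: nat
  assumes "0 < h" "h < 1" "0 < \<kappa>" "\<kappa> * N / h^(N+1) < s"
  shows "\<exists>n>N. s * h^(n+1) \<le> \<kappa> * n \<and> \<kappa> * (real n - 1) < s * h^n"
proof -
  have "0 \<le> \<kappa> * N / h^(N+1)" using assms(1,3) by simp
  then have "0 < s" using assms(4) by linarith
  define P where "P n \<longleftrightarrow> s * h^(n+1) \<le> \<kappa> * n" for n :: nat
  have "(\<lambda>n. s * (h * h^n)) \<longlonglongrightarrow> s * (h * 0)"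
    using assms(1,2) by (intro tendsto_intros LIMSEQ_power_zero) auto
  then have "eventually (\<lambda>n. s * h^(n+1) < \<kappa>) sequentially"
    using assms(3) by (intro order_tendstoD(2)) auto
  then obtain M where M: "\<And>n. M \<le> n \<Longrightarrow> s * h^(n+1) < \<kappa>"
    by (auto simp: eventually_sequentially)
  have "s * h^(M+1+1) < \<kappa>" using M[of "M+1"] by simp
  also have "\<kappa> \<le> \<kappa> * real (M+1)" using assms(3) by simp
  finally have "P (M+1)" unfolding P_def by simp
  define n where "n = (LEAST n. P n)"
  have Pn: "P n" unfolding n_def by (rule LeastI) fact
  have "N < n"
  proof (rule ccontr)
    assume "\<not> N < n"
    then have "s * h^(N+1) \<le> s * h^(n+1)"
      using assms(1,2) \<open>0 < s\<close> by (intro mult_left_mono power_decreasing) auto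
    moreover have "\<kappa> * N < s * h^(N+1)"
      using assms(1,4) by (simp add: divide_less_eq)
    moreover have "\<kappa> * n \<le> \<kappa> * N"
      using \<open>\<not> N < n\<close> assms(3) by simp
    ultimately show False using Pn unfolding P_def by linarith
  qed
  moreover have "\<not> P (n - 1)"
    by (rule not_less_Least[of "n - 1" P, folded n_def]) (use \<open>N < n\<close> in simp)
  ultimately show ?thesis
    using Pn unfolding P_def by (intro exI[of _ n]) (auto simp: of_nat_diff)
qed

text \<open>The cost of the ramp extension at level \<open>n\<close>: the layer \<open>[X\<^sub>n,Y\<^sub>n]\<close> has length \<open>\<beta>^(n+l)\<close>
  and weight at most \<open>e^(-2 s \<nu> h^n)\<close>; the plateau \<open>[Y\<^sub>n,a]\<close> has length at most
  \<open>2 \<beta>^n / (1 - \<beta>)\<close> and weight at most \<open>e^(2 s h^(n+1))\<close>.\<close>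

definition extension_cost :: "real \<Rightarrow> real \<Rightarrow> real \<Rightarrow> real \<Rightarrow> nat \<Rightarrow> real \<Rightarrow> nat \<Rightarrow> real" where
  "extension_cost h \<beta> \<nu> C l s n =
     exp (- 2 * s * \<nu> * h^n) * (1 / \<beta>^(n+l) + C * \<beta>^(n+l))
     + exp (2 * s * h^(n+1)) * C * (2 * \<beta>^n / (1 - \<beta>))"

lemma extension_cost_le_geometric:
  assumes "0 < \<beta>" "\<beta> < 1" "0 < \<nu>" "0 \<le> C"
    and up: "s * h^(n+1) \<le> \<kappa> * n" and low: "\<kappa> * (real n - 1) < s * h^n"
  shows "extension_cost h \<beta> \<nu> C l s n
    \<le> (1 + C) * exp (2 * \<nu> * \<kappa>) / \<beta>^l * (exp (- 2 * \<nu> * \<kappa>) / \<beta>)^n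
      + 2 * C / (1 - \<beta>) * (exp (2 * \<kappa>) * \<beta>)^n"
proof -
  have \<beta>_pow: "0 < \<beta>^(n+l)" "\<beta>^(n+l) \<le> 1" using assms(1,2) by (auto intro: power_le_one)
  have "exp (- 2 * s * \<nu> * h^n) \<le> exp (2 * \<nu> * \<kappa> + real n * (- 2 * \<nu> * \<kappa>))"
    using mult_left_mono[OF less_imp_le[OF low], of "2 * \<nu>"] assms(3) by (simp add: algebra_simps)
  also have "\<dots> = exp (2 * \<nu> * \<kappa>) * exp (- 2 * \<nu> * \<kappa>)^n"
    by (simp only: exp_add exp_of_nat_mult)
  finally have exp1: "exp (- 2 * s * \<nu> * h^n) \<le> exp (2 * \<nu> * \<kappa>) * exp (- 2 * \<nu> * \<kappa>)^n" .
  have "C * \<beta>^(n+l) \<le> C" using \<beta>_pow assms(4) by (simp add: mult_left_le)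
  also have "C \<le> C / \<beta>^(n+l)" using \<beta>_pow assms(4) by (simp add: le_divide_eq mult_left_le)
  finally have "1 / \<beta>^(n+l) + C * \<beta>^(n+l) \<le> (1 + C) / \<beta>^(n+l)"
    by (simp add: add_divide_distrib)
  also have "\<dots> = (1 + C) / \<beta>^l * (1 / \<beta>)^n"
    by (simp add: power_add power_one_over field_simps)
  finally have weights: "1 / \<beta>^(n+l) + C * \<beta>^(n+l) \<le> (1 + C) / \<beta>^l * (1 / \<beta>)^n" .
  have "exp (- 2 * s * \<nu> * h^n) * (1 / \<beta>^(n+l) + C * \<beta>^(n+l))
      \<le> (exp (2 * \<nu> * \<kappa>) * exp (- 2 * \<nu> * \<kappa>)^n) * ((1 + C) / \<beta>^l * (1 / \<beta>)^n)"
    using exp1 weights \<beta>_pow assms(4) by (intro mult_mono) auto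
  also have "\<dots> = (1 + C) * exp (2 * \<nu> * \<kappa>) / \<beta>^l * (exp (- 2 * \<nu> * \<kappa>) / \<beta>)^n"
    by (simp add: power_divide)
  finally have first: "exp (- 2 * s * \<nu> * h^n) * (1 / \<beta>^(n+l) + C * \<beta>^(n+l))
      \<le> (1 + C) * exp (2 * \<nu> * \<kappa>) / \<beta>^l * (exp (- 2 * \<nu> * \<kappa>) / \<beta>)^n" .
  have "exp (2 * s * h^(n+1)) \<le> exp (2 * \<kappa>)^n"
    using up by (simp add: exp_of_nat_mult[symmetric] algebra_simps)
  then have "exp (2 * s * h^(n+1)) * (2 * C / (1 - \<beta>) * \<beta>^n)
      \<le> exp (2 * \<kappa>)^n * (2 * C / (1 - \<beta>) * \<beta>^n)"
    using assms(1,2,4) by (intro mult_right_mono) auto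
  then have second: "exp (2 * s * h^(n+1)) * C * (2 * \<beta>^n / (1 - \<beta>))
      \<le> 2 * C / (1 - \<beta>) * (exp (2 * \<kappa>) * \<beta>)^n"
    by (simp add: power_mult_distrib ac_simps)
  show ?thesis
    unfolding extension_cost_def using first second by linarith
qed

lemma eventually_extension_cost_less:
  assumes h: "0 < h" "h < 1" and \<beta>: "0 < \<beta>" "\<beta> < 1" and "1 < \<nu>" "0 \<le> C" "0 \<le> K" "0 < \<epsilon>"
  shows "\<forall>\<^sub>F s in at_top. \<exists>n\<ge>1. K * extension_cost h \<beta> \<nu> C l s n < \<epsilon>"
proof -
  \<comment> \<open>\<open>\<kappa>\<close> lies strictly between \<open>-ln \<beta> / (2 \<nu>)\<close> and \<open>-ln \<beta> / 2\<close>, so both geometric ratios below are less than 1.\<close>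
  define \<kappa> where "\<kappa> = - ln \<beta> * (\<nu> + 1) / (4 * \<nu>)"
  have "ln \<beta> < 0" using \<beta> by simp
  then have "0 < \<kappa>" "ln \<beta> * (\<nu> - 1) / (2 * \<nu>) < 0" "ln \<beta> * (\<nu> - 1) / 2 < 0"
    unfolding \<kappa>_def using \<open>1 < \<nu>\<close> by (simp_all add: mult_neg_pos divide_neg_pos)
  moreover have "exp (2 * \<kappa>) * \<beta> = exp (2 * \<kappa> + ln \<beta>)"
    "exp (- 2 * \<nu> * \<kappa>) / \<beta> = exp (- 2 * \<nu> * \<kappa> - ln \<beta>)"
    using \<beta> by (simp_all add: exp_add exp_diff)
  moreover have "2 * \<kappa> + ln \<beta> = ln \<beta> * (\<nu> - 1) / (2 * \<nu>)"
    "- 2 * \<nu> * \<kappa> - ln \<beta> = ln \<beta> * (\<nu> - 1) / 2"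
    unfolding \<kappa>_def using \<open>1 < \<nu>\<close> by (simp_all add: field_simps)
  ultimately have r: "exp (2 * \<kappa>) * \<beta> < 1" "exp (- 2 * \<nu> * \<kappa>) / \<beta> < 1" by simp_all
  define T where "T n = K * ((1 + C) * exp (2 * \<nu> * \<kappa>) / \<beta>^l * (exp (- 2 * \<nu> * \<kappa>) / \<beta>)^n
      + 2 * C / (1 - \<beta>) * (exp (2 * \<kappa>) * \<beta>)^n)" for n
  have "T \<longlonglongrightarrow> K * ((1 + C) * exp (2 * \<nu> * \<kappa>) / \<beta>^l * 0 + 2 * C / (1 - \<beta>) * 0)"
    unfolding T_def[abs_def] using r \<beta> by (intro tendsto_intros LIMSEQ_power_zero) auto
  then have "eventually (\<lambda>n. T n < \<epsilon>) sequentially"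
    using \<open>0 < \<epsilon>\<close> by (intro order_tendstoD(2)) auto
  then obtain N where N: "\<And>n. N \<le> n \<Longrightarrow> T n < \<epsilon>"
    by (auto simp: eventually_sequentially)
  have "\<exists>n\<ge>1. K * extension_cost h \<beta> \<nu> C l s n < \<epsilon>" if large: "\<kappa> * N / h^(N+1) < s" for s
  proof -
    obtain n where "N < n" "s * h^(n+1) \<le> \<kappa> * n" "\<kappa> * (real n - 1) < s * h^n"
      using exists_balanced_level[OF h \<open>0 < \<kappa>\<close> large] by blast
    then have "K * extension_cost h \<beta> \<nu> C l s n \<le> T n"
      unfolding T_def using \<beta> assms(5-7) by (intro mult_left_mono extension_cost_le_geometric) auto
    also have "T n < \<epsilon>" using N \<open>N < n\<close> by simp
    finally show ?thesis using \<open>N < n\<close> by (intro exI[of _ n]) auto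
  qed
  then show ?thesis
    unfolding eventually_at_top_dense by blast
qed

section \<open>Lower and upper bounds for \<open>\<lambda>(s)\<close>\<close>

lemma lambdaN_le_lambda_s:
  assumes ab: "0 < a" "a < b" "b < 1"
    and m: "continuous_on {0..1} m" "\<And>r. r \<in> {a..b} \<Longrightarrow> m r = 0"
    and c: "continuous_on {0..1} c" "\<And>r. r \<in> {0..1} \<Longrightarrow> 0 < c r"
    and c_outside: "\<And>r. r \<in> {0..a} \<union> {b..1} \<Longrightarrow> lambdaD d c a b < c r"
  shows "lambdaN d c a b \<le> lambda_s d m c s"
proof -
  define W where "W r = r^(d-1) * exp (2 * s * m r)" for r
  have W_cont: "continuous_on {0..1} W" unfolding W_def[abs_def] using m(1) by (intro continuous_intros)
  have lambdaN: "lambdaN d c a b = Inf (normalized_energies a b W c)"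
    unfolding lambdaN_eq_Inf W_def using m(2) by (intro arg_cong[where f = Inf] normalized_energies_cong) auto
  have "lambdaN d c a b \<le> lambdaD d c a b"
    using ab c(2) by (intro lambdaN_le_lambdaD) (auto intro: less_imp_le)
  then have "Inf (normalized_energies a b W c) \<le> c r" if "r \<in> {0..a} \<union> {b..1}" for r
    using c_outside[OF that] lambdaN by linarith
  moreover have "normalized_energies 0 1 W c \<noteq> {}"
    using W_cont by (intro normalized_energies_nonempty[of _ _ _ 1]) (auto simp: W_def)
  ultimately show ?thesis
    unfolding lambdaN lambda_s_eq_Inf W_def[symmetric] using ab W_cont c
    by (intro Inf_normalized_energies_subinterval_le) (auto simp: W_def less_imp_le)
qed

lemma weight_le_exp:
  fixes r s M :: real and m :: "real \<Rightarrow> real"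
  assumes "r \<in> {0..1}" "0 \<le> s" "m r \<le> M"
  shows "r^(d-1) * exp (2 * s * m r) \<le> exp (2 * s * M)"
proof -
  have "r^(d-1) \<le> 1" using assms(1) by (simp add: power_le_one)
  moreover have "exp (2 * s * m r) \<le> exp (2 * s * M)"
    using mult_left_mono[OF assms(3), of "2 * s"] assms(2) by simp
  ultimately show ?thesis
    using assms(1) by (simp add: mult_le_one order.trans[OF mult_left_le_one_le])
qed

lemma (in geometric_partition) lambda_s_le_extension_cost:
  fixes m c psi g :: "real \<Rightarrow> real" and h \<nu> C s :: real and n :: nat
  assumes ab: "a < b" "a + b = 1"
    and m: "continuous_on {0..1} m" "\<And>r. r \<in> {a..b} \<Longrightarrow> m r = 0"
    and c: "continuous_on {0..1} c" "\<And>r. r \<in> {0..1} \<Longrightarrow> 0 \<le> c r" "\<And>r. r \<in> {0..1} \<Longrightarrow> c r \<le> C"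
    and h: "0 < h" "h < 1" "0 < \<nu>"
    and up: "\<And>k r. 1 \<le> k \<Longrightarrow> r \<in> {Y (k - 1)..X k} \<Longrightarrow> m r \<le> h^k \<and> m (1 - r) \<le> h^k"
    and down: "\<And>k r. 1 \<le> k \<Longrightarrow> r \<in> {X k..Y k} \<Longrightarrow> m r \<le> - \<nu> * h^k \<and> m (1 - r) \<le> - \<nu> * h^k"
    and psi: "H1pair a b psi g" "mass a b (\<lambda>r. r^(d-1)) psi = 1"
    and "0 \<le> s" "1 \<le> n"
  shows "lambda_s d m c s \<le> energy a b (\<lambda>r. r^(d-1)) c psi g
    + ((psi a)^2 + (psi b)^2) * extension_cost h \<beta> \<nu> C l s n"
proof -
  define W where "W r = r^(d-1) * exp (2 * s * m r)" for r
  define e1 where "e1 = exp (2 * s * (- \<nu> * h^n))"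
  define e2 where "e2 = exp (2 * s * h^(n+1))"
  have W_eq: "W r = r^(d-1)" if "r \<in> {a..b}" for r using m(2)[OF that] by (simp add: W_def)
  have XY: "0 < X n" "X n < Y n" "Y n < a" using Xseq_pos \<open>1 \<le> n\<close> Xseq_less_Yseq Yseq_less by auto
  have "0 \<le> C" using c(2,3)[of 0] by simp
  have W_e1: "W r \<le> e1" if "r \<in> {X n..Y n} \<union> {1 - Y n..1 - X n}" for r
    unfolding W_def e1_def using that XY ab \<open>0 \<le> s\<close> down[OF \<open>1 \<le> n\<close>, of r] down[OF \<open>1 \<le> n\<close>, of "1 - r"]
    by (intro weight_le_exp) auto
  have down0: "m r \<le> 0 \<and> m (1 - r) \<le> 0" if "1 \<le> k" "r \<in> {X k..Y k}" for k r
  proof -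
    have "- \<nu> * h^k \<le> 0" using h by simp
    then show ?thesis using down[OF that] by linarith
  qed
  have "m a = 0" "m (1 - a) = 0" using m(2) ab by auto
  have tail: "m r \<le> h^(n+1)" "m (1 - r) \<le> h^(n+1)" if "r \<in> {Y n..a}" for r
  proof -
    show "m r \<le> h^(n+1)"
      by (rule le_power_on_Yseq_tail[where m = m, OF h(1,2) _ _ _ that])
         (use \<open>m a = 0\<close> up down0 in auto)
    show "m (1 - r) \<le> h^(n+1)"
      by (rule le_power_on_Yseq_tail[where m = "\<lambda>x. m (1 - x)", OF h(1,2) _ _ _ that])
         (use \<open>m (1 - a) = 0\<close> up down0 in auto)
  qed
  have W_e2: "W r \<le> e2" if "r \<in> {Y n..a} \<union> {b..1 - Y n}" for r
    unfolding W_def e2_def using that XY ab \<open>0 \<le> s\<close> tail[of r] tail[of "1 - r"]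
    by (intro weight_le_exp) auto
  have "lambda_s d m c s \<le> energy a b W c psi g
      + ((psi a)^2 + (psi b)^2) * (e1 * (1 / (Y n - X n)^2 + C) * (Y n - X n) + e2 * C * (a - Y n))"
    unfolding lambda_s_eq_Inf W_def[symmetric]
  proof (rule Inf_normalized_energies_le_ramp_extension[OF _ _ _ ab psi(1)])
    show "continuous_on {0..1} W" unfolding W_def[abs_def] using m(1) by (intro continuous_intros)
    show "mass a b W psi = 1" using psi(2) mass_cong[OF W_eq] by simp
    show "0 \<le> W r" if "r \<in> {0..1}" for r using that by (simp add: W_def)
  qed (use XY c W_e1 W_e2 in auto)
  also have "\<dots> \<le> energy a b (\<lambda>r. r^(d-1)) c psi g + ((psi a)^2 + (psi b)^2) * extension_cost h \<beta> \<nu> C l s n"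
  proof -
    have "e2 * C * (a - Y n) \<le> e2 * C * (2 * \<beta>^n / (1 - \<beta>))"
      using a_minus_Yseq_le \<open>0 \<le> C\<close> by (intro mult_left_mono) (auto simp: e2_def)
    moreover have "e1 * (1 / (Y n - X n)^2 + C) * (Y n - X n)
        = exp (- 2 * s * \<nu> * h^n) * (1 / \<beta>^(n+l) + C * \<beta>^(n+l))"
      unfolding Yseq_minus_Xseq e1_def using pos by (simp add: field_simps power2_eq_square)
    moreover have "energy a b W c psi g = energy a b (\<lambda>r. r^(d-1)) c psi g"
      using energy_cong[of a b W "\<lambda>r. r^(d-1)" c] W_eq by simp
    ultimately show ?thesis
      unfolding extension_cost_def by (simp add: e2_def mult_left_mono)
  qed
  finally show ?thesis .
qed

lemma eventually_lambda_s_less: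
  assumes ab: "0 < a" "a < b" "a + b = 1"
    and m: "continuous_on {0..1} m" "\<And>r. r \<in> {a..b} \<Longrightarrow> m r = 0"
    and c: "continuous_on {0..1} c" "\<And>r. r \<in> {0..1} \<Longrightarrow> 0 < c r"
    and "in_SN m m' a" "lambdaN d c a b < u"
  shows "\<forall>\<^sub>F s in at_top. lambda_s d m c s < u"
proof -
  obtain \<delta> h \<alpha> \<beta> \<nu> l where pars: "0 < \<delta>" "0 < h" "h < \<alpha>" "\<alpha> < \<beta>" "\<beta> < 1" "1 < \<nu>"
    and sums: "(\<Sum>i. \<alpha>^(i+1+l) + \<beta>^(i+1+l)) = a - \<delta>"
    and up: "\<forall>n\<ge>1. \<forall>r\<in>{Yseq \<delta> \<alpha> \<beta> l (n-1) .. Xseq \<delta> \<alpha> \<beta> l n}. m r \<le> h^n \<and> m (1-r) \<le> h^n"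
    and down: "\<forall>n\<ge>1. \<forall>r\<in>{Xseq \<delta> \<alpha> \<beta> l n .. Yseq \<delta> \<alpha> \<beta> l n}.
                 m r \<le> - \<nu> * h^n \<and> m (1-r) \<le> - \<nu> * h^n"
    using \<open>in_SN m m' a\<close> unfolding in_SN_def by blast
  interpret geometric_partition \<delta> \<alpha> \<beta> a l
    using pars sums by unfold_locales auto
  have h: "0 < h" "h < 1" "0 < \<nu>" using pars by linarith+
  define \<epsilon> where "\<epsilon> = (u - lambdaN d c a b) / 2"
  have "0 < \<epsilon>" "u = lambdaN d c a b + 2 * \<epsilon>"
    using \<open>lambdaN d c a b < u\<close> by (simp_all add: \<epsilon>_def field_simps)
  have "normalized_energies a b (\<lambda>r. r^(d-1)) c \<noteq> {}"
    using ab by (intro normalized_energies_nonempty[of _ _ _ b] continuous_intros) auto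
  moreover have "Inf (normalized_energies a b (\<lambda>r. r^(d-1)) c) < lambdaN d c a b + \<epsilon>"
    using \<open>0 < \<epsilon>\<close> unfolding lambdaN_eq_Inf by simp
  ultimately obtain v where "v \<in> normalized_energies a b (\<lambda>r. r^(d-1)) c" "v < lambdaN d c a b + \<epsilon>"
    by (meson cInf_lessD)
  then obtain psi g where psi: "H1pair a b psi g" "mass a b (\<lambda>r. r^(d-1)) psi = 1"
    and E: "energy a b (\<lambda>r. r^(d-1)) c psi g < lambdaN d c a b + \<epsilon>"
    unfolding normalized_energies_def by blast
  obtain r0 where "r0 \<in> {0..1}" and C: "\<And>r. r \<in> {0..1} \<Longrightarrow> c r \<le> c r0"
    using continuous_attains_sup[OF compact_Icc _ c(1)] by auto
  let ?K = "(psi a)^2 + (psi b)^2"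
  have "\<forall>\<^sub>F s in at_top. \<exists>n\<ge>1. ?K * extension_cost h \<beta> \<nu> (c r0) l s n < \<epsilon>"
    using pars c(2)[OF \<open>r0 \<in> {0..1}\<close>] \<open>0 < \<epsilon>\<close> by (intro eventually_extension_cost_less) auto
  moreover have "\<forall>\<^sub>F s in at_top. 0 \<le> (s::real)" by (rule eventually_ge_at_top)
  ultimately show ?thesis
  proof eventually_elim
    case (elim s)
    then have "0 \<le> s" by simp
    from elim obtain n where "1 \<le> n" "?K * extension_cost h \<beta> \<nu> (c r0) l s n < \<epsilon>" by blast
    moreover have "lambda_s d m c s \<le> energy a b (\<lambda>r. r^(d-1)) c psi g
        + ?K * extension_cost h \<beta> \<nu> (c r0) l s n"
    proof (rule lambda_s_le_extension_cost[OF _ ab(3) m c(1) _ C h _ _ psi \<open>0 \<le> s\<close> \<open>1 \<le> n\<close>])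
      show "a < b" by fact
      show "0 \<le> c r" if "r \<in> {0..1}" for r using c(2)[OF that] by simp
      show "m r \<le> h^k \<and> m (1 - r) \<le> h^k" if "1 \<le> k" "r \<in> {Y (k - 1)..X k}" for k r
        using up that by blast
      show "m r \<le> - \<nu> * h^k \<and> m (1 - r) \<le> - \<nu> * h^k" if "1 \<le> k" "r \<in> {X k..Y k}" for k r
        using down that by blast
    qed
    ultimately show "lambda_s d m c s < u" using E \<open>u = lambdaN d c a b + 2 * \<epsilon>\<close> by linarith
  qed
qed

theorem proposition3p6:
  fixes d :: nat and a b :: real and m m' c :: "real \<Rightarrow> real"
  assumes "d \<ge> 1"
    and "0 < a" "a < b" "b < 1" "a + b = 1"
    and "\<forall>x\<in>{0..1}. (m has_real_derivative m' x) (at x within {0..1})"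
    and "continuous_on {0..1} m'"
    and "\<not> (\<exists>k. \<forall>x\<in>{0..1}. m x = k)"
    and "continuous_on {0..1} c"
    and H1a: "\<forall>r\<in>{0..1}. m r = m (1 - r)"
    and H1b: "\<forall>r\<in>{a..b}. m r = 0"
    and H2a: "\<forall>r\<in>{0..1}. c r > 0"
    and H2b: "\<forall>r\<in>{0..a} \<union> {b..1}. c r > lambdaD d c a b"
    and "in_SN m m' a"
  shows "((\<lambda>s. lambda_s d m c s) \<longlongrightarrow> lambdaN d c a b) at_top"
proof -
  \<comment> \<open>\<open>in_SN\<close> already bounds \<open>m\<close> on both mirror images.\<close>
  have m: "continuous_on {0..1} m"
    using assms(6) by (intro DERIV_continuous_on) auto
  show ?thesis
  proof (rule order_tendstoI)
    fix u assume "u < lambdaN d c a b"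
    moreover have "lambdaN d c a b \<le> lambda_s d m c s" for s
      using assms(2-4,9) m H1b H2a H2b by (intro lambdaN_le_lambda_s) auto
    ultimately show "\<forall>\<^sub>F s in at_top. u < lambda_s d m c s"
      by (auto intro: always_eventually order.strict_trans2)
  next
    fix u assume "lambdaN d c a b < u"
    then show "\<forall>\<^sub>F s in at_top. lambda_s d m c s < u"
      using assms(2,3,5,9,14) m H1b H2a by (intro eventually_lambda_s_less) auto
  qed
qed

end
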